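(* For every $n\ge 2$, the set $\mathsf{BIAS}_n$ has exactly $(n-1)!$ elements.
   Context: An affine permutation of size $n$ is a bijection $w:\mathbb{Z}\to\mathbb{Z}$ with $w(i+n)=w(i)+n$ for all $i$ and $w(1)+\cdots+w(n)=\binom{n+1}{2}$; equivalently it is determined by its base window $[w_1,\dots,w_n]=[w(1),\dots,w(n)]$, and a sequence of integers is a base window iff its entries have distinct residues mod $n$ and sum to $\binom{n+1}{2}$. $\widetilde{S}_n^\circ$ denotes the set of such $w$ with $w_1<\cdots<w_n$. $\mathsf{BIAS}_n$ (the minimal abaci) is the set of $w\in\widetilde{S}_n^\circ$ with $w_{i+1}-w_i\in\{1,\dots,n-1\}$ for all $1\le i\le n-1$. *)

theory Defs
  imports Main
begin

text \<open>An affine permutation of size n is identified with its base window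
  [w(1),...,w(n)], represented as an integer list of length n.\<close>

definition is_base_window :: "nat \<Rightarrow> int list \<Rightarrow> bool" where
  "is_base_window n w \<longleftrightarrow>
     length w = n \<and>
     (\<forall>i<n. \<forall>j<n. i \<noteq> j \<longrightarrow> w ! i mod int n \<noteq> w ! j mod int n) \<and>
     sum_list w = int ((n + 1) choose 2)"

definition sorted_affine :: "nat \<Rightarrow> int list set" where
  "sorted_affine n = {w. is_base_window n w \<and> (\<forall>i. i + 1 < n \<longrightarrow> w ! i < w ! (i + 1))}"

definition BIAS :: "nat \<Rightarrow> int list set" where
  "BIAS n = {w \<in> sorted_affine n.
     \<forall>i. i + 1 < n \<longrightarrow> 1 \<le> w ! (i + 1) - w ! i \<and> w ! (i + 1) - w ! i \<le> int n - 1}"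

end

theory Submission
  imports Defs "HOL-Combinatorics.Multiset_Permutations"
begin

text \<open>An element w of BIAS n is determined by its normalised residues
  r_i = (w_i - w_1) mod n.  Since w has distinct residues, r is a permutation of
  0, ..., n-1 with r_1 = 0; since every gap of w lies in 1, ..., n-1, each gap equals
  (r_(i+1) - r_i) mod n, so r determines w up to a common shift, which the sum
  condition fixes.  Conversely every such r arises: the gaps (r_(i+1) - r_i) mod n
  are nonzero because r is injective, and the required shift is an integer because
  the residues of the window sum to 0 + ... + (n-1), which differs from
  binomial (n+1) 2 by n.  So BIAS n is in bijection with the permutations of
  1, ..., n-1.\<close>

lemma sum_atLeast0LessThan_int: "\<Sum>{0..<int n} = int (n choose 2)"
proof (induction n)
  case (Suc n)
  have "{0..<int (Suc n)} = insert (int n) {0..<int n}" by auto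
  with Suc show ?case by (simp add: numeral_2_eq_2)
qed simp

lemma mod_diff_nonzero_if_distinct:
  fixes a b N :: int
  assumes "0 \<le> a" "a < N" "0 \<le> b" "b < N" "a \<noteq> b"
  shows "(a - b) mod N \<noteq> 0"
  using assms by (metis mod_eq_dvd_iff dvd_eq_mod_eq_0 mod_pos_pos_trivial)

lemma mod_add_left_cancel_int:
  fixes a b c N :: int
  shows "(c + a) mod N = (c + b) mod N \<longleftrightarrow> a mod N = b mod N"
  by (metis add_diff_cancel_left' mod_add_cong mod_diff_left_eq)

lemma Cons_zero_permutations_of_set_iff:
  assumes "n \<ge> 1"
  shows "p \<in> permutations_of_set {1..<int n} \<longleftrightarrow> distinct (0 # p) \<and> set (0 # p) = {0..<int n}"
proof -
  have "{0..<int n} = insert 0 {1..<int n}" "0 \<notin> {1..<int n::int}" using assms by auto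
  then show ?thesis by (auto simp: permutations_of_set_def insert_ident)
qed

definition residue_window :: "nat \<Rightarrow> int list \<Rightarrow> int list" where
  "residue_window n w = map (\<lambda>x. (x - w ! 0) mod int n) w"

lemma residue_window_nth: "i < length w \<Longrightarrow> residue_window n w ! i = (w ! i - w ! 0) mod int n"
  by (simp add: residue_window_def)

lemma residue_window_base_window:
  assumes w: "is_base_window n w" and n: "n \<ge> 1"
  shows "distinct (residue_window n w)" "set (residue_window n w) = {0..<int n}"
    "residue_window n w ! 0 = 0"
proof -
  have len: "length w = n"
    and res: "\<And>i j. i < n \<Longrightarrow> j < n \<Longrightarrow> i \<noteq> j \<Longrightarrow> w ! i mod int n \<noteq> w ! j mod int n"
    using w by (auto simp: is_base_window_def)
  let ?r = "residue_window n w"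
  have lr: "length ?r = n" by (simp add: residue_window_def len)
  show "?r ! 0 = 0" using n len by (simp add: residue_window_nth)
  show dist: "distinct ?r"
  proof (subst distinct_conv_nth, intro allI impI)
    fix i j assume ij: "i < length ?r" "j < length ?r" "i \<noteq> j"
    have "(- w ! 0 + w ! i) mod int n \<noteq> (- w ! 0 + w ! j) mod int n"
      using res[of i j] ij lr by (simp only: mod_add_left_cancel_int) simp
    then show "?r ! i \<noteq> ?r ! j" using ij lr len by (simp add: residue_window_nth)
  qed
  have "set ?r \<subseteq> {0..<int n}" using n by (auto simp: residue_window_def)
  moreover have "card (set ?r) = card {0..<int n}" using dist lr by (simp add: distinct_card)
  ultimately show "set ?r = {0..<int n}" by (intro card_subset_eq) auto
qed

definition gap_sum :: "nat \<Rightarrow> int list \<Rightarrow> nat \<Rightarrow> int" where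
  "gap_sum n r i = (\<Sum>j<i. (r ! Suc j - r ! j) mod int n)"

definition abacus_shift :: "nat \<Rightarrow> int list \<Rightarrow> int" where
  "abacus_shift n r = (int (Suc n choose 2) - (\<Sum>i<n. gap_sum n r i)) div int n"

definition abacus :: "nat \<Rightarrow> int list \<Rightarrow> int list" where
  "abacus n r = map (\<lambda>i. abacus_shift n r + gap_sum n r i) [0..<n]"

lemma gap_sum_mod: "gap_sum n r i mod int n = (r ! i - r ! 0) mod int n"
  unfolding gap_sum_def by (simp add: mod_sum_eq sum_lessThan_telescope)

lemma length_abacus [simp]: "length (abacus n r) = n"
  by (simp add: abacus_def)

lemma abacus_nth: "i < n \<Longrightarrow> abacus n r ! i = abacus_shift n r + gap_sum n r i"
  by (simp add: abacus_def)

lemma abacus_gap: "Suc i < n \<Longrightarrow> abacus n r ! Suc i - abacus n r ! i = (r ! Suc i - r ! i) mod int n"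
  by (simp add: abacus_nth gap_sum_def)

lemma abacus_residue_window:
  assumes w: "w \<in> BIAS n" and n: "n \<ge> 1"
  shows "abacus n (residue_window n w) = w"
proof -
  have len: "length w = n" and sm: "sum_list w = int (Suc n choose 2)"
    and gap: "\<And>i. Suc i < n \<Longrightarrow> 1 \<le> w ! Suc i - w ! i \<and> w ! Suc i - w ! i \<le> int n - 1"
    using w by (auto simp: BIAS_def sorted_affine_def is_base_window_def)
  let ?r = "residue_window n w"
  have r_gap: "(?r ! Suc j - ?r ! j) mod int n = w ! Suc j - w ! j" if "Suc j < n" for j
  proof -
    have "(?r ! Suc j - ?r ! j) mod int n = ((w ! Suc j - w ! 0) - (w ! j - w ! 0)) mod int n"
      using that len by (simp add: residue_window_nth mod_diff_eq)
    also have "\<dots> = w ! Suc j - w ! j" using gap[OF that] by simp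
    finally show ?thesis .
  qed
  have sums: "gap_sum n ?r i = w ! i - w ! 0" if "i < n" for i
  proof -
    have "gap_sum n ?r i = (\<Sum>j<i. w ! Suc j - w ! j)"
      unfolding gap_sum_def using that by (intro sum.cong) (simp_all add: r_gap)
    then show ?thesis by (simp add: sum_lessThan_telescope)
  qed
  have "(\<Sum>i<n. gap_sum n ?r i) = (\<Sum>i<n. w ! i) - int n * w ! 0"
    by (simp add: sums sum_subtractf)
  also have "(\<Sum>i<n. w ! i) = sum_list w"
    using len by (simp add: sum_list_sum_nth atLeast0LessThan)
  finally have "abacus_shift n ?r = w ! 0"
    using n by (simp add: abacus_shift_def sm)
  then show ?thesis
    by (intro nth_equalityI) (simp_all add: len abacus_nth sums)
qed

lemma abacus_nth_mod:
  "i < n \<Longrightarrow> abacus n r ! i mod int n = (abacus_shift n r + (r ! i - r ! 0)) mod int n"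
  by (metis abacus_nth gap_sum_mod mod_add_right_eq)

lemma sum_list_abacus:
  assumes "int n dvd int (Suc n choose 2) - (\<Sum>i<n. gap_sum n r i)"
  shows "sum_list (abacus n r) = int (Suc n choose 2)"
proof -
  have "sum_list (abacus n r) = (\<Sum>i<n. abacus_shift n r + gap_sum n r i)"
    by (simp add: sum_list_sum_nth abacus_nth atLeast0LessThan)
  also have "\<dots> = int n * abacus_shift n r + (\<Sum>i<n. gap_sum n r i)"
    by (simp add: sum.distrib)
  finally show ?thesis using assms by (simp add: abacus_shift_def)
qed

context
  fixes n :: nat and r :: "int list"
  assumes dist: "distinct r" and set_r: "set r = {0..<int n}" and r0: "r ! 0 = 0"
begin

private lemma length_r: "length r = n"
  using dist set_r by (metis card_atLeastLessThan_int diff_zero distinct_card nat_int)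

private lemma nth_r_bounds: "i < n \<Longrightarrow> 0 \<le> r ! i \<and> r ! i < int n"
  using set_r length_r by (metis atLeastLessThan_iff nth_mem)

private lemma nth_r_inj: "i < n \<Longrightarrow> j < n \<Longrightarrow> r ! i = r ! j \<Longrightarrow> i = j"
  using dist length_r by (simp add: nth_eq_iff_index_eq)

lemma residue_window_abacus: "residue_window n (abacus n r) = r"
proof (intro nth_equalityI)
  show "length (residue_window n (abacus n r)) = length r"
    by (simp add: residue_window_def length_r)
next
  fix i assume "i < length (residue_window n (abacus n r))"
  then have i: "i < n" by (simp add: residue_window_def)
  then have "residue_window n (abacus n r) ! i = gap_sum n r i mod int n"
    by (simp add: residue_window_nth abacus_nth gap_sum_def)
  also have "\<dots> = r ! i" using nth_r_bounds[OF i] by (simp add: gap_sum_mod r0)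
  finally show "residue_window n (abacus n r) ! i = r ! i" .
qed

lemma abacus_in_BIAS: "abacus n r \<in> BIAS n"
proof -
  let ?w = "abacus n r" and ?C = "int (Suc n choose 2)" and ?S = "\<Sum>i<n. gap_sum n r i"
  have residues: "?w ! i mod int n \<noteq> ?w ! j mod int n" if "i < n" "j < n" "i \<noteq> j" for i j
  proof -
    have "r ! i \<noteq> r ! j" using that nth_r_inj by blast
    then show ?thesis using that nth_r_bounds[of i] nth_r_bounds[of j]
      by (simp add: abacus_nth_mod r0 mod_add_left_cancel_int)
  qed
  have "?S mod int n = (\<Sum>i<n. gap_sum n r i mod int n) mod int n"
    by (simp add: mod_sum_eq)
  also have "\<dots> = (\<Sum>i<n. r ! i) mod int n"
    by (simp add: gap_sum_mod r0 mod_sum_eq)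
  also have "(\<Sum>i<n. r ! i) = sum_list r"
    by (simp add: sum_list_sum_nth atLeast0LessThan length_r)
  also have "\<dots> = \<Sum>{0..<int n}"
    using dist set_r by (simp add: distinct_sum_list_conv_Sum)
  finally have "(?C - ?S) mod int n = (?C - \<Sum>{0..<int n}) mod int n"
    by (metis mod_diff_right_eq)
  moreover have "?C = \<Sum>{0..<int n} + int n"
    by (simp add: sum_atLeast0LessThan_int numeral_2_eq_2)
  ultimately have "int n dvd ?C - ?S" by (simp add: dvd_eq_mod_eq_0)
  then have sum: "sum_list ?w = ?C" by (rule sum_list_abacus)
  have gaps: "1 \<le> ?w ! Suc i - ?w ! i \<and> ?w ! Suc i - ?w ! i \<le> int n - 1" if "Suc i < n" for i
  proof -
    have "(r ! Suc i - r ! i) mod int n \<noteq> 0"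
      using that nth_r_bounds[of i] nth_r_bounds[of "Suc i"] nth_r_inj[of "Suc i" i]
      by (intro mod_diff_nonzero_if_distinct) auto
    moreover have "0 \<le> (r ! Suc i - r ! i) mod int n" "(r ! Suc i - r ! i) mod int n < int n"
      using that by simp_all
    ultimately show ?thesis unfolding abacus_gap[OF that] by linarith
  qed
  show ?thesis
    unfolding BIAS_def sorted_affine_def is_base_window_def
    using residues sum gaps by fastforce
qed

end

lemma residue_window_BIAS:
  assumes w: "w \<in> BIAS n" and n: "n \<ge> 1"
  shows "tl (residue_window n w) \<in> permutations_of_set {1..<int n}"
    and "0 # tl (residue_window n w) = residue_window n w"
proof -
  let ?r = "residue_window n w"
  have "is_base_window n w" using w by (simp add: BIAS_def sorted_affine_def)
  note r = residue_window_base_window[OF this n]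
  have "?r \<noteq> []" using r(2) n by auto
  with r(3) show cons: "0 # tl ?r = ?r" by (cases ?r) auto
  show "tl ?r \<in> permutations_of_set {1..<int n}"
    using r(1,2) n by (subst Cons_zero_permutations_of_set_iff) (simp_all add: cons)
qed

theorem mainTheorem3:
  fixes n :: nat
  assumes "n \<ge> 2"
  shows "finite (BIAS n) \<and> card (BIAS n) = fact (n - 1)"
proof -
  define P where "P = permutations_of_set {1..<int n}"
  have n: "n \<ge> 1" using assms by simp
  have P_iff: "p \<in> P \<longleftrightarrow> distinct (0 # p) \<and> set (0 # p) = {0..<int n}" for p
    unfolding P_def using n by (rule Cons_zero_permutations_of_set_iff)
  have bij: "bij_betw (\<lambda>p. abacus n (0 # p)) P (BIAS n)"
  proof (rule bij_betw_byWitness[where f' = "\<lambda>w. tl (residue_window n w)"])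
    show "\<forall>p\<in>P. tl (residue_window n (abacus n (0 # p))) = p"
      using P_iff residue_window_abacus by simp
    show "\<forall>w\<in>BIAS n. abacus n (0 # tl (residue_window n w)) = w"
      using residue_window_BIAS(2) abacus_residue_window n by simp
    show "(\<lambda>p. abacus n (0 # p)) ` P \<subseteq> BIAS n"
      using P_iff abacus_in_BIAS by auto
    show "(\<lambda>w. tl (residue_window n w)) ` BIAS n \<subseteq> P"
      using residue_window_BIAS(1) n unfolding P_def by auto
  qed
  have "finite (BIAS n)"
    using bij bij_betw_finite unfolding P_def by fastforce
  moreover have "card (BIAS n) = card P"
    using bij by (simp add: bij_betw_same_card)
  moreover have "card P = fact (n - 1)"
    using n by (simp add: P_def nat_diff_distrib)
  ultimately show ?thesis by simp
qed

end
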